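(* Let $\mathcal P$ be a family of subsets of a set $X$ with $\mathcal P\subseteq\mathcal P_{seq}$. Then the $\mathcal Q_{\mathcal P}$-topology on $X/\mathcal P$ is Hausdorff.
   Context: $[x]_{\mathcal P}=\{y\in X:\forall V\in\mathcal P\ (x\in V\iff y\in V)\}$, $X/\mathcal P=\{[x]_{\mathcal P}:x\in X\}$, $q(x)=[x]_{\mathcal P}$, and the $\mathcal Q_{\mathcal P}$-topology is the coarsest topology on $X/\mathcal P$ containing all sets $q[V]$, $V\in\mathcal P$. $\mathcal P_{seq}$ is the family of all sets $W$ for which there exist $\{U_n\}_{n\in\omega},\{V_n\}_{n\in\omega}\subseteq\mathcal P$ with $U_k\subseteq X\setminus V_k\subseteq U_{k+1}$ for every $k$ and $\bigcup_nU_n=W$. *)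

theory Defs
  imports "HOL-Analysis.Analysis"
begin

definition pclass :: "'a set \<Rightarrow> 'a set set \<Rightarrow> 'a \<Rightarrow> 'a set" where
  "pclass X P x = {y \<in> X. \<forall>V\<in>P. (x \<in> V \<longleftrightarrow> y \<in> V)}"

definition pquot :: "'a set \<Rightarrow> 'a set set \<Rightarrow> 'a set set" where
  "pquot X P = pclass X P ` X"

text \<open>The Q_P-topology: coarsest topology on X/P containing all q[V], V in P.
  The whole space X/P is added as a generator so that the topspace is X/P.\<close>
definition Q_topology :: "'a set \<Rightarrow> 'a set set \<Rightarrow> 'a set topology" where
  "Q_topology X P = topology_generated_by (insert (pquot X P) ((\<lambda>V. pclass X P ` V) ` P))"

definition P_seq :: "'a set \<Rightarrow> 'a set set \<Rightarrow> 'a set set" where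
  "P_seq X P = {W. \<exists>U V :: nat \<Rightarrow> 'a set. (\<forall>n. U n \<in> P \<and> V n \<in> P) \<and>
      (\<forall>k. U k \<subseteq> X - V k \<and> X - V k \<subseteq> U (Suc k)) \<and> (\<Union>n. U n) = W}"

end

theory Submission
  imports Defs
begin

text \<open>Two distinct classes are told apart by some \<open>W \<in> P\<close> containing the point \<open>a\<close> of one
  class but not the point \<open>b\<close> of the other. Writing \<open>W = \<Union>n. U n\<close> as in the definition of
  \<open>P_seq\<close>, pick \<open>n\<close> with \<open>a \<in> U n\<close>; since \<open>b \<notin> U (Suc n) \<supseteq> X - V n\<close>, we get \<open>b \<in> V n\<close>,
  while \<open>U n \<inter> V n = {}\<close>. The images of \<open>U n\<close> and \<open>V n\<close> in \<open>X/P\<close> are then disjoint open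
  neighbourhoods of the two classes.\<close>

lemma pclass_eqI:
  assumes "\<forall>V\<in>P. a \<in> V \<longleftrightarrow> b \<in> V"
  shows "pclass X P a = pclass X P b"
  using assms unfolding pclass_def by auto

lemma pclass_eq_imp_mem_iff:
  assumes "pclass X P u = pclass X P w" and "u \<in> X" and "V \<in> P"
  shows "u \<in> V \<longleftrightarrow> w \<in> V"
proof -
  have "u \<in> pclass X P w"
    using assms(1,2) unfolding pclass_def by auto
  then show ?thesis
    using assms(3) unfolding pclass_def by auto
qed

lemma disjnt_pclass_image:
  assumes "A \<subseteq> X" and "B \<in> P" and "A \<inter> B = {}"
  shows "disjnt (pclass X P ` A) (pclass X P ` B)"
  unfolding disjnt_def
proof (rule equals0I)
  fix c assume "c \<in> pclass X P ` A \<inter> pclass X P ` B"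
  then obtain u w where "u \<in> A" "w \<in> B" "pclass X P u = pclass X P w"
    by (metis IntE imageE)
  with assms show False
    using pclass_eq_imp_mem_iff[of X P u w B] by blast
qed

lemma topspace_Q_topology:
  assumes "\<forall>V\<in>P. V \<subseteq> X"
  shows "topspace (Q_topology X P) = pquot X P"
  using assms unfolding Q_topology_def pquot_def by auto

lemma openin_Q_topology_image:
  assumes "V \<in> P"
  shows "openin (Q_topology X P) (pclass X P ` V)"
  unfolding Q_topology_def by (rule topology_generated_by_Basis) (use assms in blast)

lemma P_seq_separates:
  assumes "W \<in> P_seq X P" and "x \<in> W" and "y \<in> X - W"
  obtains A B where "A \<in> P" "B \<in> P" "x \<in> A" "y \<in> B" "A \<inter> B = {}"
proof -
  from assms(1) obtain U V :: "nat \<Rightarrow> 'a set" where UV: "\<forall>n. U n \<in> P \<and> V n \<in> P"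
    and chain: "\<forall>k. U k \<subseteq> X - V k \<and> X - V k \<subseteq> U (Suc k)" and W: "(\<Union>n. U n) = W"
    unfolding P_seq_def by blast
  from assms(2) W obtain n where "x \<in> U n" by blast
  moreover have "y \<in> V n"
    using assms(3) W chain by blast
  moreover have "U n \<inter> V n = {}"
    using chain by blast
  ultimately show thesis
    using that UV by blast
qed

lemma Q_topology_separated_pclasses:
  assumes "\<forall>V\<in>P. V \<subseteq> X"
    and "A \<in> P" and "B \<in> P" and "a \<in> A" and "b \<in> B" and "A \<inter> B = {}"
  shows "\<exists>S T. openin (Q_topology X P) S \<and> openin (Q_topology X P) T \<and>
      pclass X P a \<in> S \<and> pclass X P b \<in> T \<and> disjnt S T"
proof (intro exI conjI)
  show "disjnt (pclass X P ` A) (pclass X P ` B)"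
    using assms by (intro disjnt_pclass_image) auto
qed (use assms openin_Q_topology_image in auto)

theorem lemma3:
  fixes X :: "'a set" and P :: "'a set set"
  assumes "\<forall>V\<in>P. V \<subseteq> X"
    and "P \<subseteq> P_seq X P"
  shows "Hausdorff_space (Q_topology X P)"
  unfolding Hausdorff_space_def topspace_Q_topology[OF assms(1)] pquot_def
proof (intro allI impI, elim conjE imageE)
  fix c d a b
  assume "c \<noteq> d" and c: "c = pclass X P a" and d: "d = pclass X P b"
    and "a \<in> X" "b \<in> X"
  then have "\<not> (\<forall>V\<in>P. a \<in> V \<longleftrightarrow> b \<in> V)"
    using pclass_eqI by metis
  then obtain W where "W \<in> P" and W_sep: "a \<in> W \<longleftrightarrow> b \<notin> W"
    by blast
  then have "W \<in> P_seq X P"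
    using assms(2) by blast
  consider "a \<in> W" "b \<in> X - W" | "b \<in> W" "a \<in> X - W"
    using W_sep \<open>a \<in> X\<close> \<open>b \<in> X\<close> by blast
  then show "\<exists>S T. openin (Q_topology X P) S \<and> openin (Q_topology X P) T \<and>
      c \<in> S \<and> d \<in> T \<and> disjnt S T"
  proof cases
    case 1
    obtain A B where "A \<in> P" "B \<in> P" "a \<in> A" "b \<in> B" "A \<inter> B = {}"
      using P_seq_separates[OF \<open>W \<in> P_seq X P\<close> 1] .
    then show ?thesis
      unfolding c d by (rule Q_topology_separated_pclasses[OF assms(1)])
  next
    case 2
    obtain A B where "A \<in> P" "B \<in> P" "b \<in> A" "a \<in> B" "A \<inter> B = {}"
      using P_seq_separates[OF \<open>W \<in> P_seq X P\<close> 2] .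
    then have "\<exists>T S. openin (Q_topology X P) T \<and> openin (Q_topology X P) S \<and>
        d \<in> T \<and> c \<in> S \<and> disjnt T S"
      unfolding c d by (rule Q_topology_separated_pclasses[OF assms(1)])
    then show ?thesis
      using disjnt_sym by blast
  qed
qed

end
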